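(* Let $X$ be an infinite-dimensional complex Banach space and let $F \in \mathcal{B}(X)$ with $F^{n}$ of finite rank for some $n \in \mathbb{N}$. If $T \in \mathcal{B}(X)$ is upper semi-B-Fredholm and commutes with $F$, then $T+F$ is also upper semi-B-Fredholm.
   Context: $\mathcal{B}(X)$ is the algebra of bounded linear operators on $X$. An operator $S$ is upper semi-Fredholm if $\mathcal{R}(S)$ is closed and $\dim\mathcal{N}(S)<\infty$. $S$ is upper semi-B-Fredholm if there is $n\in\mathbb{N}$ such that $\mathcal{R}(S^n)$ is closed and the restriction $S_n$ of $S$ to $\mathcal{R}(S^n)$, viewed as a map $\mathcal{R}(S^n)\to\mathcal{R}(S^n)$, is upper semi-Fredholm. *)

theory Defs
  imports "HOL-Analysis.Analysis"
begin

text \<open>A complex Banach space is modelled as a real Banach space (type class banach)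
  together with a complex structure J (multiplication by the imaginary unit),
  compatible with the norm: for every complex scalar of modulus one,
  cos t + i sin t, scaling preserves the norm.\<close>

definition complex_structure :: "('a::banach \<Rightarrow> 'a) \<Rightarrow> bool" where
  "complex_structure J \<longleftrightarrow> linear J \<and> (\<forall>x. J (J x) = - x) \<and>
     (\<forall>x t. norm (cos t *\<^sub>R x + sin t *\<^sub>R J x) = norm x)"

definition bounded_op :: "('a::banach \<Rightarrow> 'a) \<Rightarrow> ('a \<Rightarrow> 'a) \<Rightarrow> bool" where
  "bounded_op J T \<longleftrightarrow> bounded_linear T \<and> (\<forall>x. T (J x) = J (T x))"

text \<open>Finite-dimensional subset (finite real dimension, equivalent to finite complex dimension).\<close>
definition fin_dim :: "'a::real_vector set \<Rightarrow> bool" where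
  "fin_dim S \<longleftrightarrow> (\<exists>B. finite B \<and> S \<subseteq> span B)"

definition upper_semi_fredholm_on :: "'a::real_normed_vector set \<Rightarrow> ('a \<Rightarrow> 'a) \<Rightarrow> bool" where
  "upper_semi_fredholm_on V T \<longleftrightarrow>
     closedin (top_of_set V) (T ` V) \<and> fin_dim {x \<in> V. T x = 0}"

definition upper_semi_fredholm :: "('a::real_normed_vector \<Rightarrow> 'a) \<Rightarrow> bool" where
  "upper_semi_fredholm T \<longleftrightarrow> upper_semi_fredholm_on UNIV T"

definition upper_semi_B_fredholm :: "('a::real_normed_vector \<Rightarrow> 'a) \<Rightarrow> bool" where
  "upper_semi_B_fredholm T \<longleftrightarrow>
     (\<exists>n. closed (range (T ^^ n)) \<and> upper_semi_fredholm_on (range (T ^^ n)) T)"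

end

theory Submission
  imports Defs
begin

text \<open>
  Fix n with R(T^n) closed and T upper semi-Fredholm on M = R(T^n), and m with F^m of finite
  rank; put S = T + F. The kernel Z of F^m is a closed subspace of finite codimension, invariant
  under T and F, on which F is nilpotent. Expanding powers of the commuting sum, on Z one gets
  S^(k+m) = T^k \<psi> and T^(k+m) = \<psi>' S^k with bounded operators \<psi>, \<psi>'. Powers of T stay
  upper semi-Fredholm on M, so T^(n+d)(Z) is closed, and the second factorisation together with
  the open mapping theorem transfers closedness to S^K(Z) for K \<ge> n + m; adding the
  finite-dimensional image of a complement of Z gives closedness of R(S^K). On S^(n+m)(Z) \<subseteq> M
  the kernel of S lies in the kernel of T^m (there T = -F and F^m = 0), which is
  finite-dimensional on M; hence N(S) \<inter> R(S^(n+m)) is finite-dimensional.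
\<close>

section \<open>Sums of subspaces and finite dimension\<close>

lemma set_plus_eq_sums: "A + B = {x + y |x y. x \<in> A \<and> y \<in> B}"
  by (auto simp: set_plus_def)

lemma subspace_set_plus: "subspace A \<Longrightarrow> subspace B \<Longrightarrow> subspace (A + B)"
  unfolding set_plus_eq_sums by (rule subspace_sums)

lemma span_insert_eq_set_plus: "span (insert b B) = span {b} + span B"
  using span_Un[of "{b}" B] by (simp add: set_plus_eq_sums)

lemma set_plus_span_singletonE:
  assumes "x \<in> A + span {v}"
  obtains a t where "a \<in> A" "x = a + t *\<^sub>R v"
  using assms by (auto elim!: set_plus_elim simp: span_singleton)

lemma fin_dimE:
  assumes "fin_dim W"
  obtains G where "finite G" "G \<subseteq> W" "W \<subseteq> span G"
proof -
  obtain B where B: "finite B" "W \<subseteq> span B" using assms unfolding fin_dim_def by blast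
  obtain G where G: "G \<subseteq> W" "independent G" "W \<subseteq> span G" by (rule maximal_independent_subset)
  have "finite G" using independent_span_bound[OF B(1) G(2)] G(1) B(2) by blast
  with G that show ?thesis by blast
qed

lemma fin_dim_subset: "fin_dim B \<Longrightarrow> A \<subseteq> B \<Longrightarrow> fin_dim A"
  unfolding fin_dim_def by blast

lemma fin_dim_linear_vimage:
  assumes L: "linear L" and M: "subspace M"
    and ker: "fin_dim {x \<in> M. L x = 0}" and E: "fin_dim E"
  shows "fin_dim {x \<in> M. L x \<in> E}"
proof -
  obtain K where K: "finite K" "{x \<in> M. L x = 0} \<subseteq> span K" using ker unfolding fin_dim_def by blast
  have "fin_dim (L ` {x \<in> M. L x \<in> E})" using E by (rule fin_dim_subset) blast
  then obtain G where G: "finite G" "G \<subseteq> L ` {x \<in> M. L x \<in> E}" "L ` {x \<in> M. L x \<in> E} \<subseteq> span G"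
    by (rule fin_dimE)
  obtain H where H: "H \<subseteq> {x \<in> M. L x \<in> E}" "finite H" "G = L ` H"
    using finite_subset_image[OF G(1,2)] by blast
  have HM: "span H \<subseteq> M" using H(1) by (intro span_minimal[OF _ M]) blast
  have "{x \<in> M. L x \<in> E} \<subseteq> span (K \<union> H)"
  proof
    fix x assume x: "x \<in> {x \<in> M. L x \<in> E}"
    then have "L x \<in> span (L ` H)" using G H by blast
    then obtain h where h: "h \<in> span H" "L x = L h" using span_linear_image[OF L] by auto
    have "x - h \<in> M" using x h HM M by (auto intro: subspace_diff)
    moreover have "L (x - h) = 0" using h L by (simp add: linear_diff)
    ultimately have "x - h \<in> span K" using K(2) by blast
    then have "(x - h) + h \<in> span (K \<union> H)"
      using h(1) by (meson span_add span_mono sup_ge1 sup_ge2 subsetD)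
    then show "x \<in> span (K \<union> H)" by simp
  qed
  then show ?thesis unfolding fin_dim_def using K(1) H(2) by blast
qed

lemma fin_dim_Int_set_plus_line:
  assumes N: "subspace N" and A: "subspace A" and NA: "fin_dim (N \<inter> A)"
  shows "fin_dim (N \<inter> (A + span {v}))"
proof -
  obtain G where G: "finite G" "N \<inter> A \<subseteq> span G" using NA unfolding fin_dim_def by blast
  show ?thesis
  proof (cases "\<exists>a\<in>A. a + v \<in> N")
    case True
    then obtain a0 where a0: "a0 \<in> A" "a0 + v \<in> N" by blast
    have "N \<inter> (A + span {v}) \<subseteq> span (insert (a0 + v) G)"
    proof
      fix x assume x: "x \<in> N \<inter> (A + span {v})"
      then have "x \<in> A + span {v}" by blast
      then obtain a t where at: "a \<in> A" "x = a + t *\<^sub>R v" by (rule set_plus_span_singletonE)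
      have "x - t *\<^sub>R (a0 + v) = a - t *\<^sub>R a0" using at by (simp add: algebra_simps)
      moreover have "x - t *\<^sub>R (a0 + v) \<in> N" using x a0 N by (simp add: subspace_diff subspace_scale)
      moreover have "a - t *\<^sub>R a0 \<in> A" using at a0 A by (simp add: subspace_diff subspace_scale)
      ultimately have "x - t *\<^sub>R (a0 + v) \<in> span (insert (a0 + v) G)"
        using G(2) span_mono[OF subset_insertI, of G "a0 + v"] by auto
      moreover have "t *\<^sub>R (a0 + v) \<in> span (insert (a0 + v) G)" by (simp add: span_base span_scale)
      ultimately show "x \<in> span (insert (a0 + v) G)" by (metis diff_add_cancel span_add)
    qed
    then show ?thesis using G(1) unfolding fin_dim_def by blast
  next
    case False
    have "N \<inter> (A + span {v}) \<subseteq> N \<inter> A"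
    proof
      fix x assume x: "x \<in> N \<inter> (A + span {v})"
      then have "x \<in> A + span {v}" by blast
      then obtain a t where at: "a \<in> A" "x = a + t *\<^sub>R v" by (rule set_plus_span_singletonE)
      have "t = 0"
      proof (rule ccontr)
        assume "t \<noteq> 0"
        then have "(1 / t) *\<^sub>R a + v = (1 / t) *\<^sub>R x" using at by (simp add: algebra_simps)
        moreover have "(1 / t) *\<^sub>R x \<in> N" "(1 / t) *\<^sub>R a \<in> A" using x at N A by (simp_all add: subspace_scale)
        ultimately show False using False by (metis IntD1 x)
      qed
      then show "x \<in> N \<inter> A" using x at by simp
    qed
    then show ?thesis by (rule fin_dim_subset[OF NA])
  qed
qed

lemma fin_dim_Int_set_plus_span:
  assumes "finite B" "subspace N" "subspace A" "fin_dim (N \<inter> A)"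
  shows "fin_dim (N \<inter> (A + span B))"
  using assms(1)
proof (induction B rule: finite_induct)
  case empty
  then show ?case using assms(4) by simp
next
  case (insert b B)
  have "N \<inter> (A + span (insert b B)) = N \<inter> ((A + span B) + span {b})"
    using span_insert_eq_set_plus[of b B] by (simp add: ac_simps)
  then show ?case
    using fin_dim_Int_set_plus_line[OF assms(2) subspace_set_plus[OF assms(3) subspace_span] insert.IH]
    by simp
qed

lemma set_plus_span_singleton_absorb:
  assumes "subspace M" "v \<in> M"
  shows "M + span {v} = M"
proof (intro equalityI subsetI)
  fix x assume "x \<in> M + span {v}"
  then obtain m t where "m \<in> M" "x = m + t *\<^sub>R v" by (rule set_plus_span_singletonE)
  then show "x \<in> M" using assms by (simp add: subspace_add subspace_scale)
next
  fix x assume "x \<in> M"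
  then have "x + 0 \<in> M + span {v}" by (intro set_plus_intro span_zero)
  then show "x \<in> M + span {v}" by simp
qed

lemma abs_scale_infdist_le_norm:
  fixes M :: "'a::real_normed_vector set"
  assumes M: "subspace M" "m \<in> M"
  shows "\<bar>t\<bar> * infdist v M \<le> norm (m + t *\<^sub>R v)"
proof (cases "t = 0")
  case False
  have "- ((1/t) *\<^sub>R m) \<in> M" using M by (simp add: subspace_neg subspace_scale)
  then have "infdist v M \<le> dist v (- ((1/t) *\<^sub>R m))" by (rule infdist_le)
  also have "\<dots> = norm ((1/t) *\<^sub>R (m + t *\<^sub>R v))" using False by (simp add: dist_norm algebra_simps)
  also have "\<dots> = norm (m + t *\<^sub>R v) / \<bar>t\<bar>" by simp
  finally show ?thesis using False by (simp add: field_simps)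
qed simp

lemma closed_set_plus_line:
  fixes M :: "'a::real_normed_vector set"
  assumes M: "closed M" "subspace M"
  shows "closed (M + span {v})"
proof (cases "v \<in> M")
  case True
  with M show ?thesis by (simp add: set_plus_span_singleton_absorb)
next
  case False
  define d where "d = infdist v M"
  have d: "d > 0" unfolding d_def
    using infdist_pos_not_in_closed[OF M(1) _ False] subspace_0[OF M(2)] by auto
  show ?thesis
    unfolding closed_sequential_limits
  proof (intro allI impI, elim conjE)
    fix y l assume y: "\<forall>n. y n \<in> M + span {v}" and l: "y \<longlonglongrightarrow> l"
    have "\<forall>n. \<exists>m t. m \<in> M \<and> y n = m + t *\<^sub>R v"
      using y by (meson set_plus_span_singletonE)
    then obtain m t where mt: "\<And>n. m n \<in> M" "\<And>n. y n = m n + t n *\<^sub>R v" by metis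
    \<comment> \<open>since d > 0, the coefficients t n inherit the Cauchy property from y n\<close>
    have "Cauchy t"
    proof (rule CauchyI)
      fix e :: real assume e: "e > 0"
      obtain N where N: "\<forall>i\<ge>N. \<forall>j\<ge>N. norm (y i - y j) < e * d"
        using CauchyD[OF LIMSEQ_imp_Cauchy[OF l], of "e * d"] e d by auto
      have "\<bar>t i - t j\<bar> * d < e * d" if "i \<ge> N" "j \<ge> N" for i j
      proof -
        have "m i - m j \<in> M" using mt(1) M(2) by (simp add: subspace_diff)
        then have "\<bar>t i - t j\<bar> * d \<le> norm ((m i - m j) + (t i - t j) *\<^sub>R v)"
          unfolding d_def using M(2) by (intro abs_scale_infdist_le_norm)
        also have "(m i - m j) + (t i - t j) *\<^sub>R v = y i - y j" by (simp add: mt algebra_simps)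
        finally show ?thesis using N that by fastforce
      qed
      then have "\<forall>i\<ge>N. \<forall>j\<ge>N. norm (t i - t j) < e" using d by simp
      then show "\<exists>N. \<forall>i\<ge>N. \<forall>j\<ge>N. norm (t i - t j) < e" by blast
    qed
    then obtain t0 where t0: "t \<longlonglongrightarrow> t0" using Cauchy_convergent_iff convergent_def by blast
    have "(\<lambda>n. y n - t n *\<^sub>R v) \<longlonglongrightarrow> l - t0 *\<^sub>R v" by (intro tendsto_intros l t0)
    moreover have "(\<lambda>n. y n - t n *\<^sub>R v) = m" by (simp add: mt fun_eq_iff)
    ultimately have "m \<longlonglongrightarrow> l - t0 *\<^sub>R v" by simp
    then have "l - t0 *\<^sub>R v \<in> M" using closed_sequentially[OF M(1)] mt(1) by blast
    then have "(l - t0 *\<^sub>R v) + t0 *\<^sub>R v \<in> M + span {v}"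
      by (intro set_plus_intro span_scale span_base) simp_all
    then show "l \<in> M + span {v}" by simp
  qed
qed

lemma closed_set_plus_span:
  fixes M :: "'a::real_normed_vector set"
  assumes "finite B" "closed M" "subspace M"
  shows "closed (M + span B)"
  using assms(1)
proof (induction B rule: finite_induct)
  case empty
  then show ?case using assms(2) by simp
next
  case (insert b B)
  have "M + span (insert b B) = (M + span B) + span {b}"
    using span_insert_eq_set_plus[of b B] by (simp add: ac_simps)
  then show ?case
    using closed_set_plus_line[OF insert.IH subspace_set_plus[OF assms(3) subspace_span]] by simp
qed

lemma closed_span_finite:
  fixes B :: "'a::real_normed_vector set"
  shows "finite B \<Longrightarrow> closed (span B)"
  using closed_set_plus_span[of B "{0}"] by simp

lemma closed_fin_dim_subspace:
  fixes E :: "'a::real_normed_vector set"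
  assumes "fin_dim E" "subspace E"
  shows "closed E"
proof -
  obtain G where "finite G" "G \<subseteq> E" "E \<subseteq> span G" using assms(1) by (rule fin_dimE)
  then show ?thesis using closed_span_finite assms(2) by (metis span_subspace)
qed

lemma closed_set_plus_finite_codim:
  fixes Z W :: "'a::real_normed_vector set"
  assumes Z: "closed Z" "subspace Z" and E: "finite E" "Z + span E = UNIV" and W: "subspace W"
  shows "closed (Z + W)"
proof -
  have ZW: "subspace (Z + W)" using Z(2) W by (rule subspace_set_plus)
  obtain G where G: "finite G" "G \<subseteq> span E \<inter> (Z + W)" "span E \<inter> (Z + W) \<subseteq> span G"
    using fin_dimE[of "span E \<inter> (Z + W)"] E(1) unfolding fin_dim_def by blast
  have "Z + W = Z + span G"
  proof (intro equalityI subsetI)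
    fix x assume "x \<in> Z + W"
    then obtain z w where zw: "x = z + w" "z \<in> Z" "w \<in> W" by (rule set_plus_elim)
    obtain z' e where ze: "z' \<in> Z" "e \<in> span E" "w = z' + e"
      using E(2) by (metis UNIV_I set_plus_elim)
    have "- z' + w \<in> Z + W" using zw ze Z(2) by (intro set_plus_intro subspace_neg)
    then have "e \<in> Z + W" using ze by simp
    then have "e \<in> span G" using G ze(2) by blast
    moreover have "x = (z + z') + e" using zw ze by simp
    moreover have "z + z' \<in> Z" using zw ze Z(2) by (simp add: subspace_add)
    ultimately show "x \<in> Z + span G" by blast
  next
    fix x assume "x \<in> Z + span G"
    then obtain z g where zg: "x = z + g" "z \<in> Z" "g \<in> span G" by (rule set_plus_elim)
    have "span G \<subseteq> Z + W" using G(2) ZW by (intro span_minimal) auto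
    then have "g \<in> Z + W" using zg by blast
    then obtain z' w where zw: "z' \<in> Z" "w \<in> W" "g = z' + w" by (rule set_plus_elim)
    have "x = (z + z') + w" using zg zw by simp
    moreover have "z + z' \<in> Z" using zg zw Z(2) by (simp add: subspace_add)
    ultimately show "x \<in> Z + W" using zw by blast
  qed
  then show ?thesis using closed_set_plus_span[OF G(1) Z] by simp
qed

section \<open>The open mapping theorem on closed subspaces\<close>

lemma Baire_closed_cover_ball:
  fixes Y :: "'a::banach set" and C :: "nat \<Rightarrow> 'a set"
  assumes Y: "closed Y" "Y \<noteq> {}" and C: "\<And>k. closed (C k)" "\<And>k. C k \<subseteq> Y" "Y \<subseteq> (\<Union>k. C k)"
  obtains k y0 r where "y0 \<in> Y" "r > 0" "Y \<inter> ball y0 r \<subseteq> C k"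
proof -
  let ?X = "top_of_set Y"
  have cover: "\<Union>(range C) = Y" using C(2,3) by blast
  have "completely_metrizable_space ?X"
    using completely_metrizable_space_closedin[OF completely_metrizable_space_euclidean] Y(1) by simp
  moreover have "closedin ?X (C k)" for k using C(1,2) by (simp add: closed_subset)
  moreover have "?X interior_of \<Union>(range C) \<noteq> {}"
    using cover Y(2) by (metis topspace_euclidean_subtopology interior_of_topspace)
  ultimately obtain k where "?X interior_of C k \<noteq> {}"
    using Baire_category_alt[of ?X "range C"] by auto
  then obtain y0 where y0: "y0 \<in> ?X interior_of C k" by blast
  obtain U where U: "open U" "?X interior_of C k = Y \<inter> U"
    using openin_interior_of by (meson openin_open)
  obtain r where r: "r > 0" "ball y0 r \<subseteq> U" using U y0 open_contains_ball by blast
  have "Y \<inter> ball y0 r \<subseteq> C k" using r U interior_of_subset[of ?X "C k"] by blast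
  moreover have "y0 \<in> Y" using y0 U by blast
  ultimately show ?thesis using r(1) by (intro that)
qed

lemma open_mapping_near_zero:
  fixes A :: "'a::banach \<Rightarrow> 'b::banach"
  assumes A: "bounded_linear A" and V: "closed V" "subspace V" and AV: "closed (A ` V)"
  obtains r k where "r > 0"
    "\<And>y e. y \<in> A ` V \<Longrightarrow> norm y < r \<Longrightarrow> e > 0 \<Longrightarrow> \<exists>x\<in>V. norm x \<le> k \<and> norm (y - A x) < e"
proof -
  interpret A: bounded_linear A by fact
  define C where "C k = closure (A ` (V \<inter> cball 0 (real k)))" for k
  have ne: "A ` V \<noteq> {}" using subspace_0[OF V(2)] by blast
  have closed: "closed (C k)" for k unfolding C_def by simp
  have sub: "C k \<subseteq> A ` V" for k unfolding C_def using AV by (intro closure_minimal) auto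
  have cover: "A ` V \<subseteq> (\<Union>k. C k)"
  proof
    fix y assume "y \<in> A ` V"
    then obtain x where x: "x \<in> V" "y = A x" by blast
    obtain k :: nat where "norm x \<le> real k" using real_arch_simple by blast
    then show "y \<in> (\<Union>k. C k)" using x closure_subset unfolding C_def by fastforce
  qed
  obtain k y0 r where k: "y0 \<in> A ` V" "r > 0" "A ` V \<inter> ball y0 r \<subseteq> C k"
    by (rule Baire_closed_cover_ball[OF AV ne closed sub cover])
  \<comment> \<open>y is approximated by the difference of approximations of y0 + y and y0\<close>
  have approx: "\<exists>x\<in>V. norm x \<le> 2 * real k \<and> norm (y - A x) < e"
    if y: "y \<in> A ` V" "norm y < r" and e: "e > 0" for y e
  proof -
    obtain x0 x where "x0 \<in> V" "y0 = A x0" "x \<in> V" "y = A x" using y k(1) by blast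
    then have "y0 + y \<in> A ` V" using V(2) by (metis A.add imageI subspace_add)
    moreover have "y0 + y \<in> ball y0 r" using y by (simp add: dist_norm)
    ultimately have "y0 + y \<in> C k" using k(3) by blast
    then obtain x1 where x1: "x1 \<in> V \<inter> cball 0 (real k)" "dist (A x1) (y0 + y) < e/2"
      unfolding C_def closure_approachable using e by (metis half_gt_zero image_iff)
    have "y0 \<in> C k" using k by auto
    then obtain x2 where x2: "x2 \<in> V \<inter> cball 0 (real k)" "dist (A x2) y0 < e/2"
      unfolding C_def closure_approachable using e by (metis half_gt_zero image_iff)
    have "norm (y0 + y - A x1) + norm (A x2 - y0) < e"
      using x1(2) x2(2) by (simp add: dist_norm norm_minus_commute)
    moreover have "y - A (x1 - x2) = (y0 + y - A x1) + (A x2 - y0)" by (simp add: A.diff algebra_simps)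
    ultimately have "norm (y - A (x1 - x2)) < e" by (metis norm_triangle_lt)
    moreover have "norm (x1 - x2) \<le> 2 * real k" using x1 x2 norm_triangle_ineq4[of x1 x2] by simp
    moreover have "x1 - x2 \<in> V" using x1 x2 V(2) by (simp add: subspace_diff)
    ultimately show ?thesis by blast
  qed
  show ?thesis using k(2) approx by (rule that)
qed

lemma open_mapping_approx:
  fixes A :: "'a::banach \<Rightarrow> 'b::banach"
  assumes A: "bounded_linear A" and V: "closed V" "subspace V" and AV: "closed (A ` V)"
  obtains c where "c > 0"
    "\<And>y e. y \<in> A ` V \<Longrightarrow> e > 0 \<Longrightarrow> \<exists>x\<in>V. norm x \<le> c * norm y \<and> norm (y - A x) < e"
proof -
  interpret A: bounded_linear A by fact
  obtain r k where r: "r > 0" and near0: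
    "\<And>y e. y \<in> A ` V \<Longrightarrow> norm y < r \<Longrightarrow> e > 0 \<Longrightarrow> \<exists>x\<in>V. norm x \<le> k \<and> norm (y - A x) < e"
    using open_mapping_near_zero[OF assms] by blast
  define c where "c = 2 * \<bar>k\<bar> / r + 1"
  have approx: "\<exists>x\<in>V. norm x \<le> c * norm y \<and> norm (y - A x) < e"
    if y: "y \<in> A ` V" and e: "e > 0" for y e
  proof (cases "y = 0")
    case True
    then show ?thesis using subspace_0[OF V(2)] e by force
  next
    case False
    define s where "s = r / (2 * norm y)"
    have s: "s > 0" "norm (s *\<^sub>R y) < r" using False r by (simp_all add: s_def)
    obtain x0 where "x0 \<in> V" "y = A x0" using y by blast
    then have "s *\<^sub>R y \<in> A ` V" using V(2) by (metis A.scaleR imageI subspace_scale)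
    then obtain x where x: "x \<in> V" "norm x \<le> k" "norm (s *\<^sub>R y - A x) < s * e"
      using near0[of "s *\<^sub>R y" "s * e"] s e by auto
    have "(1/s) *\<^sub>R x \<in> V" using x V(2) by (simp add: subspace_scale)
    moreover have "norm ((1/s) *\<^sub>R x) \<le> c * norm y"
    proof -
      have "norm ((1/s) *\<^sub>R x) \<le> \<bar>k\<bar> / s" using x s by (simp add: divide_right_mono)
      also have "\<dots> = 2 * \<bar>k\<bar> / r * norm y" using False r by (simp add: s_def field_simps)
      also have "\<dots> \<le> c * norm y" unfolding c_def by (simp add: distrib_right)
      finally show ?thesis .
    qed
    moreover have "norm (y - A ((1/s) *\<^sub>R x)) < e"
    proof -
      have "y - A ((1/s) *\<^sub>R x) = (1/s) *\<^sub>R (s *\<^sub>R y - A x)" using s by (simp add: A.scaleR algebra_simps)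
      then show ?thesis using x s by (simp add: divide_less_eq mult.commute)
    qed
    ultimately show ?thesis by blast
  qed
  have "c > 0" using r by (simp add: c_def add_nonneg_pos)
  then show ?thesis using approx by (rule that)
qed

lemma approximate_preimage_series:
  fixes A :: "'a::real_normed_vector \<Rightarrow> 'b::real_normed_vector"
  assumes A: "linear A" and V: "subspace V" and y: "y \<in> A ` V" "y \<noteq> 0" and c: "c \<ge> 0"
    and approx: "\<And>y e. y \<in> A ` V \<Longrightarrow> e > 0 \<Longrightarrow> \<exists>x\<in>V. norm x \<le> c * norm y \<and> norm (y - A x) < e"
  obtains xs where "\<And>i. xs i \<in> V" "\<And>i. norm (xs i) \<le> c * norm y / 2 ^ i"
    "\<And>n. norm (y - (\<Sum>i<n. A (xs i))) \<le> norm y / 2 ^ n"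
proof -
  have "\<forall>z i. \<exists>x. z \<in> A ` V \<longrightarrow> x \<in> V \<and> norm x \<le> c * norm z \<and> norm (z - A x) < norm y / 2 ^ Suc i"
    using approx y(2) by (metis divide_pos_pos zero_less_norm_iff zero_less_power zero_less_numeral)
  then obtain g where g: "\<And>z i. z \<in> A ` V \<Longrightarrow>
      g z i \<in> V \<and> norm (g z i) \<le> c * norm z \<and> norm (z - A (g z i)) < norm y / 2 ^ Suc i"
    by metis
  define res where "res = rec_nat y (\<lambda>i z. z - A (g z i))"
  have res_Suc: "res (Suc i) = res i - A (g (res i) i)" for i by (simp add: res_def)
  have res: "res i \<in> A ` V \<and> norm (res i) \<le> norm y / 2 ^ i" for i
  proof (induction i)
    case 0
    then show ?case using y by (simp add: res_def)
  next
    case (Suc i)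
    then obtain w where w: "w \<in> V" "res i = A w" by blast
    have "res (Suc i) = A (w - g (res i) i)" using w A by (simp add: res_Suc linear_diff)
    moreover have "w - g (res i) i \<in> V" using w g Suc V by (simp add: subspace_diff)
    ultimately show ?case using g[of "res i" i] Suc res_Suc by auto
  qed
  define xs where "xs i = g (res i) i" for i
  have "xs i \<in> V" for i using g res by (simp add: xs_def)
  moreover have "norm (xs i) \<le> c * norm y / 2 ^ i" for i
  proof -
    have "norm (xs i) \<le> c * norm (res i)" using g res by (simp add: xs_def)
    also have "\<dots> \<le> c * (norm y / 2 ^ i)" using res[of i] c by (intro mult_left_mono) auto
    finally show ?thesis by simp
  qed
  moreover have "res n = y - (\<Sum>i<n. A (xs i))" for n
    by (induction n) (simp_all add: res_def xs_def)
  ultimately show ?thesis using res that by metis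
qed

lemma geometric_series_preimage:
  fixes A :: "'a::banach \<Rightarrow> 'b::real_normed_vector"
  assumes A: "bounded_linear A" and V: "closed V" "subspace V" and xs: "\<And>i. xs i \<in> V"
    and bound: "\<And>i. norm (xs i) \<le> c * norm y / 2 ^ i"
    and res: "\<And>n. norm (y - (\<Sum>i<n. A (xs i))) \<le> norm y / 2 ^ n"
  shows "\<exists>x\<in>V. A x = y \<and> norm x \<le> 2 * c * norm y"
proof -
  interpret A: bounded_linear A by fact
  have geom: "(\<lambda>i. c * norm y / 2 ^ i) sums (2 * c * norm y)"
    using sums_mult[OF geometric_sums[of "1/2::real"], of "c * norm y"]
    by (simp add: power_one_over field_simps)
  have norms: "summable (\<lambda>i. norm (xs i))"
    by (rule summable_comparison_test[OF _ sums_summable[OF geom]]) (use bound in auto)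
  define x where "x = suminf xs"
  have lim: "(\<lambda>n. \<Sum>i<n. xs i) \<longlonglongrightarrow> x"
    unfolding x_def by (rule summable_LIMSEQ[OF summable_norm_cancel[OF norms]])
  have "x \<in> V" by (rule closed_sequentially[OF V(1) _ lim]) (simp add: subspace_sum[OF V(2)] xs)
  moreover have "A x = y"
  proof (rule LIMSEQ_unique)
    show "(\<lambda>n. A (\<Sum>i<n. xs i)) \<longlonglongrightarrow> A x" using lim by (rule A.tendsto)
    have "(\<lambda>n. y - (\<Sum>i<n. A (xs i))) \<longlonglongrightarrow> 0"
      by (rule Lim_null_comparison[OF _ LIMSEQ_divide_realpow_zero[of 2 "norm y"]]) (use res in simp_all)
    then have "(\<lambda>n. y - (y - (\<Sum>i<n. A (xs i)))) \<longlonglongrightarrow> y - 0" by (intro tendsto_intros)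
    then show "(\<lambda>n. A (\<Sum>i<n. xs i)) \<longlonglongrightarrow> y" by (simp add: A.sum)
  qed
  moreover have "norm x \<le> (\<Sum>i. norm (xs i))" unfolding x_def using norms by (rule summable_norm)
  moreover have "(\<Sum>i. norm (xs i)) \<le> 2 * c * norm y"
    using suminf_le[OF _ norms sums_summable[OF geom]] bound by (simp add: sums_unique[OF geom, symmetric])
  ultimately show ?thesis by force
qed

theorem open_mapping_closed_subspace:
  fixes A :: "'a::banach \<Rightarrow> 'b::banach"
  assumes A: "bounded_linear A" and V: "closed V" "subspace V" and AV: "closed (A ` V)"
  obtains K where "K > 0" "\<And>y. y \<in> A ` V \<Longrightarrow> \<exists>x\<in>V. A x = y \<and> norm x \<le> K * norm y"
proof -
  obtain c where c: "c > 0"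
    and approx: "\<And>y e. y \<in> A ` V \<Longrightarrow> e > 0 \<Longrightarrow> \<exists>x\<in>V. norm x \<le> c * norm y \<and> norm (y - A x) < e"
    using open_mapping_approx[OF assms] by blast
  have "\<exists>x\<in>V. A x = y \<and> norm x \<le> 2 * c * norm y" if y: "y \<in> A ` V" for y
  proof (cases "y = 0")
    case True
    then show ?thesis using subspace_0[OF V(2)] linear_0[OF bounded_linear.linear[OF A]] by force
  next
    case False
    obtain xs where "\<And>i. xs i \<in> V" "\<And>i. norm (xs i) \<le> c * norm y / 2 ^ i"
      "\<And>n. norm (y - (\<Sum>i<n. A (xs i))) \<le> norm y / 2 ^ n"
      using approximate_preimage_series[OF bounded_linear.linear[OF A] V(2) y False] c approx
      by (metis less_eq_real_def)
    then show ?thesis by (rule geometric_series_preimage[OF A V])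
  qed
  moreover have "2 * c > 0" using c by simp
  ultimately show ?thesis using that by blast
qed

lemma image_sequence_lift:
  fixes A :: "'a::banach \<Rightarrow> 'b::banach"
  assumes A: "bounded_linear A" and V: "closed V" "subspace V" and AV: "closed (A ` V)"
    and x: "\<And>n. x n \<in> V" and lim: "(\<lambda>n. A (x n)) \<longlonglongrightarrow> l"
  obtains x0 u where "x0 \<in> V" "A x0 = l" "\<And>n. u n \<in> V" "\<And>n. A (u n) = A (x n)" "u \<longlonglongrightarrow> x0"
proof -
  interpret A: bounded_linear A by fact
  obtain K where K: "\<And>y. y \<in> A ` V \<Longrightarrow> \<exists>x\<in>V. A x = y \<and> norm x \<le> K * norm y"
    using open_mapping_closed_subspace[OF assms(1-4)] by blast
  obtain x0 where x0: "x0 \<in> V" "A x0 = l"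
    using closed_sequentially[OF AV _ lim] x by blast
  have "A (x n) - l \<in> A ` V" for n
    using x x0 V(2) by (metis A.diff imageI subspace_diff)
  then have "\<forall>n. \<exists>d. d \<in> V \<and> A d = A (x n) - l \<and> norm d \<le> K * norm (A (x n) - l)"
    using K by blast
  then obtain d where d: "\<And>n. d n \<in> V" "\<And>n. A (d n) = A (x n) - l"
    "\<And>n. norm (d n) \<le> K * norm (A (x n) - l)" by metis
  have "d \<longlonglongrightarrow> 0"
  proof (rule Lim_null_comparison)
    show "\<forall>\<^sub>F n in sequentially. norm (d n) \<le> K * norm (A (x n) - l)" using d(3) by simp
    have "(\<lambda>n. K * norm (A (x n) - l)) \<longlonglongrightarrow> K * norm (l - l)" by (intro tendsto_intros lim)
    then show "(\<lambda>n. K * norm (A (x n) - l)) \<longlonglongrightarrow> 0" by simp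
  qed
  then have "(\<lambda>n. x0 + d n) \<longlonglongrightarrow> x0 + 0" by (intro tendsto_intros)
  moreover have "x0 + d n \<in> V" "A (x0 + d n) = A (x n)" for n
    using x0 d V(2) by (simp_all add: subspace_add A.add)
  ultimately show ?thesis using x0 by (intro that[of x0 "\<lambda>n. x0 + d n"]) simp_all
qed

lemma closed_image_subspace_containing_kernel:
  fixes A :: "'a::banach \<Rightarrow> 'b::banach"
  assumes A: "bounded_linear A" and V: "closed V" "subspace V" and AV: "closed (A ` V)"
    and C: "closed C" "subspace C" "C \<subseteq> V" "{x \<in> V. A x = 0} \<subseteq> C"
  shows "closed (A ` C)"
  unfolding closed_sequential_limits
proof (intro allI impI, elim conjE)
  interpret A: bounded_linear A by fact
  fix y l assume y: "\<forall>n. y n \<in> A ` C" and l: "y \<longlonglongrightarrow> l"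
  then have "\<forall>n. \<exists>c. c \<in> C \<and> y n = A c" by blast
  then obtain c where c: "\<And>n. c n \<in> C" "\<And>n. y n = A (c n)" by metis
  have cV: "c n \<in> V" for n using c(1) C(3) by blast
  have "(\<lambda>n. A (c n)) \<longlonglongrightarrow> l" using l by (simp add: c(2)[symmetric])
  then obtain x0 u where u: "x0 \<in> V" "A x0 = l" "\<And>n. u n \<in> V" "\<And>n. A (u n) = A (c n)" "u \<longlonglongrightarrow> x0"
    by (rule image_sequence_lift[where x = c, OF A V AV cV]) blast
  have "c n - u n \<in> V" "A (c n - u n) = 0" for n using u cV V(2) by (simp_all add: subspace_diff A.diff)
  then have "c n - u n \<in> C" for n using C(4) by blast
  then have "c n - (c n - u n) \<in> C" for n using C(2) c(1) by (metis subspace_diff)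
  then have "x0 \<in> C" using closed_sequentially[OF C(1) _ u(5)] by simp
  then show "l \<in> A ` C" using u(2) by blast
qed

lemma closed_image_if_closed_comp_image:
  fixes B :: "'a::banach \<Rightarrow> 'b::banach" and Q :: "'b \<Rightarrow> 'c::banach"
  assumes Z: "closed Z" "subspace Z" and B: "bounded_linear B" and Q: "bounded_linear Q"
    and QB: "closed ((\<lambda>x. Q (B x)) ` Z)" and ker: "fin_dim (B ` {x \<in> Z. Q (B x) = 0})"
  shows "closed (B ` Z)"
  unfolding closed_sequential_limits
proof (intro allI impI, elim conjE)
  interpret B: bounded_linear B by fact
  interpret Q: bounded_linear Q by fact
  have QB_bl: "bounded_linear (\<lambda>x. Q (B x))" using bounded_linear_compose[OF Q B] .
  fix y l assume y: "\<forall>n. y n \<in> B ` Z" and l: "y \<longlonglongrightarrow> l"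
  then have "\<forall>n. \<exists>x. x \<in> Z \<and> y n = B x" by blast
  then obtain x where x: "\<And>n. x n \<in> Z" "\<And>n. y n = B (x n)" by metis
  have "(\<lambda>n. Q (B (x n))) \<longlonglongrightarrow> Q l" using Q.tendsto[OF l] by (simp add: x)
  then obtain x0 u where u: "x0 \<in> Z" "Q (B x0) = Q l" "\<And>n. u n \<in> Z"
      "\<And>n. Q (B (u n)) = Q (B (x n))" "u \<longlonglongrightarrow> x0"
    by (rule image_sequence_lift[where x = x, OF QB_bl Z QB x(1)]) blast
  \<comment> \<open>the differences x n - u n lie in the kernel of Q B, whose image under B is closed\<close>
  have K: "x n - u n \<in> {x \<in> Z. Q (B x) = 0}" for n
    using x u Z(2) by (simp add: subspace_diff B.diff Q.diff)
  have lim: "(\<lambda>n. y n - B (u n)) \<longlonglongrightarrow> l - B x0" by (intro tendsto_intros l u(5) B.tendsto)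
  have "{x \<in> Z. Q (B x) = 0} = Z \<inter> {x. Q (B x) = 0}" by blast
  then have "subspace {x \<in> Z. Q (B x) = 0}"
    using subspace_inter[OF Z(2) linear_subspace_kernel[OF bounded_linear.linear[OF QB_bl]]] by simp
  then have "closed (B ` {x \<in> Z. Q (B x) = 0})"
    by (intro closed_fin_dim_subspace[OF ker] linear_subspace_image[OF B.linear])
  moreover have "y n - B (u n) \<in> B ` {x \<in> Z. Q (B x) = 0}" for n
    using K[of n] by (simp add: x(2) B.diff[symmetric])
  ultimately have "l - B x0 \<in> B ` {x \<in> Z. Q (B x) = 0}"
    using lim by (rule closed_sequentially)
  then obtain w where w: "w \<in> Z" "l - B x0 = B w" by blast
  then have "l = B (x0 + w)" by (simp add: B.add algebra_simps)
  moreover have "x0 + w \<in> Z" using Z(2) u(1) w(1) by (rule subspace_add)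
  ultimately show "l \<in> B ` Z" by blast
qed

section \<open>Powers of commuting operators\<close>

lemma linear_funpow:
  fixes f :: "'a::real_vector \<Rightarrow> 'a"
  shows "linear f \<Longrightarrow> linear (f ^^ n)"
  by (induction n) (simp_all add: linear_id linear_compose)

lemma bounded_linear_funpow:
  fixes f :: "'a::real_normed_vector \<Rightarrow> 'a"
  shows "bounded_linear f \<Longrightarrow> bounded_linear (f ^^ n)"
proof (induction n)
  case 0
  show ?case by (simp add: id_def bounded_linear_ident)
next
  case (Suc n)
  then have "bounded_linear (\<lambda>x. f ((f ^^ n) x))" by (auto intro: bounded_linear_compose)
  then show ?case by (simp add: comp_def)
qed

lemma funpow_commute_apply:
  assumes "\<And>x. f (g x) = g (f x)"
  shows "f ((g ^^ n) x) = (g ^^ n) (f x)"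
  by (induction n) (simp_all add: assms)

lemma funpow_commute_funpow:
  assumes "\<And>x. f (g x) = g (f x)"
  shows "(f ^^ m) ((g ^^ n) x) = (g ^^ n) ((f ^^ m) x)"
  by (induction m arbitrary: x) (simp_all add: funpow_commute_apply[of f g, OF assms])

lemma funpow_in_invariant: "(\<And>x. x \<in> Z \<Longrightarrow> f x \<in> Z) \<Longrightarrow> x \<in> Z \<Longrightarrow> (f ^^ n) x \<in> Z"
  by (induction n) simp_all

lemma funpow_uminus:
  fixes F :: "'a::real_vector \<Rightarrow> 'a"
  assumes F: "linear F"
  shows "((\<lambda>x. - F x) ^^ k) y = (-1) ^ k *\<^sub>R (F ^^ k) y"
proof (induction k)
  case (Suc k)
  have "((\<lambda>x. - F x) ^^ Suc k) y = - F (((\<lambda>x. - F x) ^^ k) y)" by simp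
  also have "\<dots> = - ((-1) ^ k *\<^sub>R F ((F ^^ k) y))" using Suc by (simp add: linear_scale[OF F])
  finally show ?case by simp
qed simp

lemma funpow_on_kernel_of_sum:
  fixes T F :: "'a::real_vector \<Rightarrow> 'a"
  assumes T: "linear T" and F: "linear F" and TF: "\<And>x. F (T x) = T (F x)" and y: "T y + F y = 0"
  shows "(T ^^ k) y = (-1) ^ k *\<^sub>R (F ^^ k) y"
proof (induction k)
  case (Suc k)
  have "(T ^^ Suc k) y = (T ^^ k) (T y)" by (simp add: funpow_Suc_right del: funpow.simps)
  also have "T y = - F y" using y by (simp add: eq_neg_iff_add_eq_0)
  also have "(T ^^ k) (- F y) = - (T ^^ k) (F y)" using linear_funpow[OF T] by (simp add: linear_neg)
  also have "(T ^^ k) (F y) = F ((T ^^ k) y)" using funpow_commute_apply[of F T, OF TF] by simp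
  finally show ?case using Suc by (simp add: linear_scale[OF F])
qed simp

definition commutant_on :: "'a::real_normed_vector set \<Rightarrow> ('a \<Rightarrow> 'a) \<Rightarrow> ('a \<Rightarrow> 'a) \<Rightarrow> bool" where
  "commutant_on Z W \<psi> \<longleftrightarrow> bounded_linear \<psi> \<and> (\<forall>x. \<psi> (W x) = W (\<psi> x)) \<and> (\<forall>x\<in>Z. \<psi> x \<in> Z)"

lemma commutant_on_zero: "linear W \<Longrightarrow> subspace Z \<Longrightarrow> commutant_on Z W (\<lambda>x. 0)"
  by (simp add: commutant_on_def bounded_linear_zero linear_0 subspace_0)

lemma commutant_on_add:
  assumes W: "linear W" and "commutant_on Z W \<psi>" "commutant_on Z W \<phi>" "subspace Z"
  shows "commutant_on Z W (\<lambda>x. \<psi> x + \<phi> x)"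
  using assms by (simp add: commutant_on_def bounded_linear_add linear_add subspace_add)

lemma commutant_on_comp:
  assumes "commutant_on Z W \<psi>" "commutant_on Z W \<phi>"
  shows "commutant_on Z W (\<lambda>x. \<psi> (\<phi> x))"
  using assms by (simp add: commutant_on_def bounded_linear_compose)

lemma commutant_on_funpow:
  assumes "commutant_on Z W \<psi>"
  shows "commutant_on Z W (\<psi> ^^ n)"
proof -
  have "bounded_linear \<psi>" "\<And>x. W (\<psi> x) = \<psi> (W x)" "\<And>x. x \<in> Z \<Longrightarrow> \<psi> x \<in> Z"
    using assms by (simp_all add: commutant_on_def)
  then show ?thesis
    using bounded_linear_funpow funpow_commute_apply[of W \<psi>] funpow_in_invariant[of Z \<psi>]
    by (simp add: commutant_on_def)
qed

lemma funpow_perturbation_step: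
  fixes U W G :: "'a::real_vector \<Rightarrow> 'a"
  assumes U: "\<And>x. U x = W x + G x" and W: "linear W" and G: "linear G"
    and WG: "\<And>x. W (G x) = G (W x)"
  shows "(G ^^ j) ((U ^^ Suc i) x) = (G ^^ j) ((U ^^ i) (W x)) + (G ^^ Suc j) ((U ^^ i) x)"
proof -
  have "U = (\<lambda>x. W x + G x)" using U by (simp add: fun_eq_iff)
  then have "linear U" using linear_compose_add[OF W G] by simp
  have UG: "U (G x) = G (U x)" for x using U WG linear_add[OF G] by simp
  have "(U ^^ Suc i) x = (U ^^ i) (W x) + (U ^^ i) (G x)"
    using U linear_add[OF linear_funpow[OF \<open>linear U\<close>]] by (simp add: funpow_Suc_right del: funpow.simps)
  moreover have "(U ^^ i) (G x) = G ((U ^^ i) x)" using funpow_commute_apply[of G U, OF UG[symmetric]] by simp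
  ultimately show ?thesis
    using linear_add[OF linear_funpow[OF G]] by (simp add: funpow_Suc_right del: funpow.simps)
qed

lemma funpow_eq_0_if_le:
  fixes G :: "'a::real_vector \<Rightarrow> 'a"
  assumes G: "linear G" and "(G ^^ p) x = 0" "p \<le> j"
  shows "(G ^^ j) x = 0"
proof -
  have "(G ^^ j) x = (G ^^ (j - p)) ((G ^^ p) x)"
    using \<open>p \<le> j\<close> by (metis funpow_add comp_apply le_add_diff_inverse2)
  then show ?thesis using \<open>(G ^^ p) x = 0\<close> linear_0[OF linear_funpow[OF G]] by simp
qed

lemma perturbed_funpow_factor:
  fixes U W G :: "'a::real_normed_vector \<Rightarrow> 'a"
  assumes U: "\<And>x. U x = W x + G x" and W: "bounded_linear W" and G: "commutant_on Z W G"
    and Z: "subspace Z" "\<And>x. x \<in> Z \<Longrightarrow> W x \<in> Z" and nil: "\<And>x. x \<in> Z \<Longrightarrow> (G ^^ p) x = 0"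
  shows "\<exists>\<psi>. commutant_on Z W \<psi> \<and> (\<forall>x\<in>Z. (G ^^ j) ((U ^^ i) x) = (W ^^ (i + j - p)) (\<psi> x))"
proof -
  have lW: "linear W" using W by (rule bounded_linear.linear)
  have lG: "linear G" using G by (simp add: commutant_on_def bounded_linear.linear)
  have Wcomm: "commutant_on Z W W" using W Z(2) by (simp add: commutant_on_def)
  show ?thesis
  proof (induction i arbitrary: j)
    case 0
    show ?case
    proof (cases "p \<le> j")
      case True
      have "(G ^^ j) x = 0" if "x \<in> Z" for x using funpow_eq_0_if_le[OF lG nil[OF that] True] .
      then show ?thesis using commutant_on_zero[OF lW Z(1)] linear_0[OF linear_funpow[OF lW]] by auto
    next
      case False
      then show ?thesis using commutant_on_funpow[OF G] by auto
    qed
  next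
    case (Suc i)
    obtain \<psi> where \<psi>: "commutant_on Z W \<psi>" "\<forall>x\<in>Z. (G ^^ j) ((U ^^ i) x) = (W ^^ (i + j - p)) (\<psi> x)"
      using Suc by blast
    obtain \<phi> where \<phi>: "commutant_on Z W \<phi>"
      "\<forall>x\<in>Z. (G ^^ Suc j) ((U ^^ i) x) = (W ^^ (i + Suc j - p)) (\<phi> x)"
      using Suc by blast
    have step: "(G ^^ j) ((U ^^ Suc i) x) = (W ^^ (i + j - p)) (W (\<psi> x)) + (W ^^ (i + Suc j - p)) (\<phi> x)"
      if "x \<in> Z" for x
      using funpow_perturbation_step[OF U lW] G \<psi> \<phi> that Z(2)
      by (simp add: commutant_on_def bounded_linear.linear)
    show ?case
    proof (cases "p \<le> i + j")
      case True
      have "(W ^^ (i + j - p)) (W y) = (W ^^ (Suc i + j - p)) y" for y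
        using True by (simp add: Suc_diff_le funpow_swap1)
      then show ?thesis
        using commutant_on_add[OF lW \<psi>(1) \<phi>(1) Z(1)] step True
          linear_add[OF linear_funpow[OF lW]] by (intro exI[of _ "\<lambda>x. \<psi> x + \<phi> x"]) simp
    next
      case False
      then show ?thesis
        using commutant_on_add[OF lW commutant_on_comp[OF Wcomm \<psi>(1)] \<phi>(1) Z(1)] step
        by (intro exI[of _ "\<lambda>x. W (\<psi> x) + \<phi> x"]) simp
    qed
  qed
qed

corollary perturbed_funpow_factor_on:
  fixes U W G :: "'a::real_normed_vector \<Rightarrow> 'a"
  assumes "\<And>x. U x = W x + G x" "bounded_linear W" "commutant_on Z W G"
    "subspace Z" "\<And>x. x \<in> Z \<Longrightarrow> W x \<in> Z" "\<And>x. x \<in> Z \<Longrightarrow> (G ^^ p) x = 0"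
  shows "\<exists>\<psi>. commutant_on Z W \<psi> \<and> (\<forall>x\<in>Z. (U ^^ (k + p)) x = (W ^^ k) (\<psi> x))"
  using perturbed_funpow_factor[OF assms, of 0 "k + p"] by auto

section \<open>Upper semi-Fredholm operators and finite-codimensional subspaces\<close>

lemma image_set_plus_kernel:
  assumes T: "linear T" and N: "0 \<in> N" "\<And>k. k \<in> N \<Longrightarrow> T k = 0"
  shows "T ` (R + N) = T ` R"
proof (intro equalityI subsetI)
  fix y assume "y \<in> T ` (R + N)"
  then obtain x where x: "x \<in> R + N" "y = T x" by blast
  from x(1) obtain r k where "x = r + k" "r \<in> R" "k \<in> N" by (rule set_plus_elim)
  then show "y \<in> T ` R" using x(2) N(2) by (simp add: linear_add[OF T])
next
  fix y assume "y \<in> T ` R"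
  then obtain r where "r \<in> R" "y = T r" by blast
  moreover have "r + 0 \<in> R + N" using \<open>r \<in> R\<close> N(1) by (rule set_plus_intro)
  ultimately show "y \<in> T ` (R + N)" by (metis add_0_right imageI)
qed

lemma upper_semi_fredholm_on_closed_image:
  fixes T :: "'a::banach \<Rightarrow> 'a"
  assumes T: "bounded_linear T" and M: "closed M" "subspace M" and usf: "upper_semi_fredholm_on M T"
    and R: "closed R" "subspace R" "R \<subseteq> M"
  shows "closed (T ` R)"
proof -
  have TM: "closed (T ` M)"
    using closedin_closed_trans[OF _ M(1)] usf by (simp add: upper_semi_fredholm_on_def)
  have "fin_dim {x \<in> M. T x = 0}" using usf by (simp add: upper_semi_fredholm_on_def)
  then obtain K where K: "finite K" "K \<subseteq> {x \<in> M. T x = 0}" "{x \<in> M. T x = 0} \<subseteq> span K"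
    by (rule fin_dimE)
  have spanK: "span K \<subseteq> M \<inter> {x. T x = 0}"
    using K(2) by (intro span_minimal subspace_inter M(2) linear_subspace_kernel bounded_linear.linear T) auto
  \<comment> \<open>R + span K is closed and contains the kernel, and T maps it onto T ` R\<close>
  have "closed (T ` (R + span K))"
  proof (rule closed_image_subspace_containing_kernel[OF T M TM])
    show "closed (R + span K)" using K(1) R(1,2) by (rule closed_set_plus_span)
    show "subspace (R + span K)" using R(2) subspace_span by (rule subspace_set_plus)
    show "R + span K \<subseteq> M"
    proof
      fix x assume "x \<in> R + span K"
      then obtain r k where "x = r + k" "r \<in> R" "k \<in> span K" by (rule set_plus_elim)
      then show "x \<in> M" using R(3) spanK M(2) by (auto intro: subspace_add)
    qed
    show "{x \<in> M. T x = 0} \<subseteq> R + span K"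
      using K(3) set_zero_plus2[OF subspace_0[OF R(2)], of "span K"] by blast
  qed
  moreover have "T ` (R + span K) = T ` R"
    using spanK by (intro image_set_plus_kernel bounded_linear.linear[OF T] span_zero) blast+
  ultimately show ?thesis by simp
qed

lemma fin_dim_kernel_funpow:
  fixes T :: "'a::real_vector \<Rightarrow> 'a"
  assumes T: "linear T" and M: "subspace M" "T ` M \<subseteq> M" and ker: "fin_dim {x \<in> M. T x = 0}"
  shows "fin_dim {x \<in> M. (T ^^ k) x = 0}"
proof (induction k)
  case 0
  have "{x \<in> M. (T ^^ 0) x = 0} \<subseteq> span {}" by (auto simp: span_empty)
  then show ?case unfolding fin_dim_def by blast
next
  case (Suc k)
  have "{x \<in> M. (T ^^ Suc k) x = 0} = {x \<in> M. T x \<in> {y \<in> M. (T ^^ k) y = 0}}"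
    using M(2) by (auto simp: funpow_Suc_right simp del: funpow.simps)
  then show ?case using fin_dim_linear_vimage[OF T M(1) ker Suc] by simp
qed

lemma upper_semi_fredholm_on_funpow:
  fixes T :: "'a::banach \<Rightarrow> 'a"
  assumes T: "bounded_linear T" and M: "closed M" "subspace M" and usf: "upper_semi_fredholm_on M T"
  shows "upper_semi_fredholm_on M (T ^^ k)"
proof -
  have "closedin (top_of_set M) (T ` M)" using usf by (simp add: upper_semi_fredholm_on_def)
  then have TM: "T ` M \<subseteq> M" by (metis closedin_subset topspace_euclidean_subtopology)
  have sub: "(T ^^ k) ` M \<subseteq> M" for k using funpow_in_invariant[of M T] TM by blast
  have "closed ((T ^^ k) ` M)"
  proof (induction k)
    case (Suc k)
    have "closed (T ` (T ^^ k) ` M)"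
      using upper_semi_fredholm_on_closed_image[OF T M usf Suc]
        linear_subspace_image[OF linear_funpow[OF bounded_linear.linear[OF T]] M(2)] sub by blast
    then show ?case by (simp add: image_comp)
  qed (simp add: M(1))
  moreover have "fin_dim {x \<in> M. (T ^^ k) x = 0}"
    using fin_dim_kernel_funpow[OF bounded_linear.linear[OF T] M(2) TM] usf
    by (simp add: upper_semi_fredholm_on_def)
  ultimately show ?thesis using closed_subset[OF sub] by (simp add: upper_semi_fredholm_on_def)
qed

lemma kernel_finite_codim:
  fixes L :: "'a::real_vector \<Rightarrow> 'b::real_vector"
  assumes L: "linear L" and rank: "fin_dim (range L)"
  obtains E where "finite E" "{x. L x = 0} + span E = UNIV"
proof -
  obtain G where G: "finite G" "G \<subseteq> range L" "range L \<subseteq> span G" using rank by (rule fin_dimE)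
  obtain E where E: "finite E" "G = L ` E" using finite_subset_image[OF G(1,2)] by blast
  have "x \<in> {x. L x = 0} + span E" for x
  proof -
    have "L x \<in> span (L ` E)" using G E by blast
    then obtain e where e: "e \<in> span E" "L x = L e" using span_linear_image[OF L] by auto
    then have "(x - e) + e \<in> {x. L x = 0} + span E" using L by (intro set_plus_intro) (simp_all add: linear_diff)
    then show ?thesis by simp
  qed
  then show ?thesis using E(1) that by blast
qed

lemma range_linear_eq_image_set_plus_span:
  assumes L: "linear L" and E: "Z + span E = UNIV"
  shows "range L = L ` Z + span (L ` E)"
proof (intro equalityI subsetI)
  fix y assume "y \<in> range L"
  then obtain x where x: "y = L x" by blast
  have "x \<in> Z + span E" using E by simp
  then obtain z e where "x = z + e" "z \<in> Z" "e \<in> span E" by (rule set_plus_elim)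
  then show "y \<in> L ` Z + span (L ` E)"
    using x span_linear_image[OF L] by (auto simp: linear_add[OF L])
next
  fix y assume "y \<in> L ` Z + span (L ` E)"
  then obtain w v where wv: "y = w + v" "w \<in> L ` Z" "v \<in> span (L ` E)" by (rule set_plus_elim)
  then obtain z e where "w = L z" "v = L e" using span_linear_image[OF L] by blast
  then have "y = L (z + e)" using wv(1) by (simp add: linear_add[OF L])
  then show "y \<in> range L" by blast
qed

lemma closed_image_finite_codim:
  fixes A :: "'a::banach \<Rightarrow> 'b::banach"
  assumes A: "bounded_linear A" "closed (range A)"
    and Z: "closed Z" "subspace Z" and E: "finite E" "Z + span E = UNIV"
  shows "closed (A ` Z)"
proof -
  let ?N = "{x. A x = 0}"
  have N: "subspace ?N" by (rule linear_subspace_kernel[OF bounded_linear.linear[OF A(1)]])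
  have "closed (A ` (Z + ?N))"
  proof (rule closed_image_subspace_containing_kernel[OF A(1) closed_UNIV subspace_UNIV A(2)])
    show "closed (Z + ?N)" by (rule closed_set_plus_finite_codim[OF Z E N])
    show "subspace (Z + ?N)" by (rule subspace_set_plus[OF Z(2) N])
    show "{x \<in> UNIV. A x = 0} \<subseteq> Z + ?N" using set_zero_plus2[OF subspace_0[OF Z(2)]] by auto
  qed simp
  moreover have "A ` (Z + ?N) = A ` Z"
    by (rule image_set_plus_kernel[OF bounded_linear.linear[OF A(1)] subspace_0[OF N]]) simp
  ultimately show ?thesis by simp
qed

section \<open>Perturbation by a commuting operator with a finite-rank power\<close>

locale commuting_finite_rank_perturbation =
  fixes T F :: "'a::banach \<Rightarrow> 'a" and n m :: nat
  assumes T: "bounded_linear T" and F: "bounded_linear F"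
    and commute: "\<And>x. T (F x) = F (T x)"
    and finite_rank: "fin_dim (range (F ^^ m))"
    and closed_range: "closed (range (T ^^ n))"
    and upper_semi_fredholm: "upper_semi_fredholm_on (range (T ^^ n)) T"
begin

definition S :: "'a \<Rightarrow> 'a" where "S = (\<lambda>x. T x + F x)"
definition M :: "'a set" where "M = range (T ^^ n)"
definition Z :: "'a set" where "Z = {x. (F ^^ m) x = 0}"

lemma S: "bounded_linear S"
  unfolding S_def using T F by (rule bounded_linear_add)

lemma linear_funpow_TFS: "linear (T ^^ k)" "linear (F ^^ k)" "linear (S ^^ k)"
  using T F S by (simp_all add: bounded_linear.linear bounded_linear_funpow)

lemma M: "closed M" "subspace M"
  using closed_range linear_subspace_image[OF linear_funpow_TFS(1) subspace_UNIV] by (simp_all add: M_def)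

lemma range_T_funpow: "range (T ^^ (n + d)) = (T ^^ d) ` M"
  unfolding M_def by (simp add: funpow_add image_comp flip: add.commute)

lemma upper_semi_fredholm_on_M: "upper_semi_fredholm_on M (T ^^ k)"
  using upper_semi_fredholm_on_funpow[OF T M] upper_semi_fredholm by (simp add: M_def)

lemma closed_range_T_funpow: "closed (range (T ^^ (n + d)))"
  using upper_semi_fredholm_on_M[of d] closedin_closed_trans[OF _ M(1)]
  by (simp add: range_T_funpow upper_semi_fredholm_on_def)

lemma range_T_funpow_subset: "range (T ^^ (n + d)) \<subseteq> M"
proof -
  have "closedin (top_of_set M) ((T ^^ d) ` M)"
    using upper_semi_fredholm_on_M[of d] by (simp add: upper_semi_fredholm_on_def)
  then show ?thesis unfolding range_T_funpow by (metis closedin_subset topspace_euclidean_subtopology)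
qed

lemma fin_dim_kernel_T_funpow: "fin_dim {x \<in> M. (T ^^ k) x = 0}"
  using upper_semi_fredholm_on_M by (simp add: upper_semi_fredholm_on_def)

lemma Z: "closed Z" "subspace Z"
  unfolding Z_def
  by (rule closed_Collect_eq, auto intro: linear_continuous_on bounded_linear_funpow F)
    (rule linear_subspace_kernel[OF linear_funpow_TFS(2)])

lemma Z_invariant: "x \<in> Z \<Longrightarrow> T x \<in> Z" "x \<in> Z \<Longrightarrow> F x \<in> Z" "x \<in> Z \<Longrightarrow> S x \<in> Z"
proof -
  assume x: "x \<in> Z"
  show TZ: "T x \<in> Z"
    using x funpow_commute_apply[of T F, OF commute, of m x] linear_0[OF bounded_linear.linear[OF T]]
    by (simp add: Z_def)
  show FZ: "F x \<in> Z"
    using x linear_0[OF bounded_linear.linear[OF F]] by (simp add: Z_def funpow_swap1[symmetric])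
  show "S x \<in> Z" using TZ FZ Z(2) by (simp add: S_def subspace_add)
qed

lemma F_nilpotent_on_Z: "x \<in> Z \<Longrightarrow> (F ^^ m) x = 0"
  by (simp add: Z_def)

lemma Z_finite_codim: obtains E where "finite E" "Z + span E = UNIV"
  using kernel_finite_codim[OF linear_funpow_TFS(2) finite_rank] unfolding Z_def by blast

lemma closed_T_funpow_image_Z: "closed ((T ^^ (n + d)) ` Z)"
  using closed_image_finite_codim[OF bounded_linear_funpow[OF T] closed_range_T_funpow Z]
    Z_finite_codim by metis

lemma F_commutant_on_Z: "commutant_on Z T F"
  using F commute Z_invariant(2) by (simp add: commutant_on_def)

lemma S_funpow_image_Z_subset: "(S ^^ (k + m)) ` Z \<subseteq> (T ^^ k) ` Z"
proof -
  have "S x = T x + F x" for x by (simp add: S_def)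
  then obtain \<psi> where \<psi>: "commutant_on Z T \<psi>" "\<forall>x\<in>Z. (S ^^ (k + m)) x = (T ^^ k) (\<psi> x)"
    using perturbed_funpow_factor_on[OF _ T F_commutant_on_Z Z(2) Z_invariant(1) F_nilpotent_on_Z]
    by blast
  then show ?thesis by (auto simp: commutant_on_def)
qed

lemma S_funpow_image_Z_subset_M: "(S ^^ (n + d + m)) ` Z \<subseteq> M"
  using S_funpow_image_Z_subset[of "n + d"] range_T_funpow_subset[of d] by blast

lemma T_funpow_factor_through_S:
  "\<exists>\<psi>. bounded_linear \<psi> \<and> (\<forall>x\<in>Z. \<psi> ((S ^^ k) x) = (T ^^ (k + m)) x)"
proof -
  have SF: "commutant_on Z S (\<lambda>x. - F x)"
    using bounded_linear_minus[OF F] commute Z_invariant(2) Z(2)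
      linear_neg[OF bounded_linear.linear[OF F]] linear_add[OF bounded_linear.linear[OF F]]
      linear_neg[OF bounded_linear.linear[OF T]]
    by (simp add: commutant_on_def S_def subspace_neg)
  have nil: "((\<lambda>x. - F x) ^^ m) x = 0" if "x \<in> Z" for x
    using funpow_uminus[OF bounded_linear.linear[OF F]] F_nilpotent_on_Z[OF that] by simp
  \<comment> \<open>T is in turn the perturbation of S by -F, which is nilpotent on Z\<close>
  have TS: "T x = S x + - F x" for x by (simp add: S_def)
  obtain \<psi> where \<psi>: "commutant_on Z S \<psi>" "\<forall>x\<in>Z. (T ^^ (k + m)) x = (S ^^ k) (\<psi> x)"
    using perturbed_funpow_factor_on[OF TS S SF Z(2) Z_invariant(3) nil] by blast
  have "\<psi> ((S ^^ k) x) = (T ^^ (k + m)) x" if "x \<in> Z" for x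
    using \<psi> funpow_commute_apply[of \<psi> S] that by (simp add: commutant_on_def)
  then show ?thesis using \<psi>(1) by (auto simp: commutant_on_def)
qed

lemma closed_S_funpow_image_Z: "closed ((S ^^ (n + d + m)) ` Z)"
proof -
  define K where "K = n + d + m"
  obtain \<psi> where \<psi>: "bounded_linear \<psi>" "\<forall>x\<in>Z. \<psi> ((S ^^ K) x) = (T ^^ (K + m)) x"
    using T_funpow_factor_through_S by blast
  have "(\<lambda>x. \<psi> ((S ^^ K) x)) ` Z = (T ^^ (n + (d + m + m))) ` Z"
    using \<psi>(2) unfolding K_def by (auto simp: add.assoc image_iff)
  then have closed_comp: "closed ((\<lambda>x. \<psi> ((S ^^ K) x)) ` Z)" using closed_T_funpow_image_Z by simp
  \<comment> \<open>S^K maps the kernel of \<psi> S^K into the finite-dimensional kernel of T^(K+m) on M\<close>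
  have "(S ^^ K) ` {x \<in> Z. \<psi> ((S ^^ K) x) = 0} \<subseteq> {y \<in> M. (T ^^ (K + m)) y = 0}"
  proof clarify
    fix x assume x: "x \<in> Z" "\<psi> ((S ^^ K) x) = 0"
    have "(T ^^ (K + m)) ((S ^^ K) x) = (S ^^ K) ((T ^^ (K + m)) x)"
      using funpow_commute_funpow[of T S] commute by (simp add: S_def linear_add[OF bounded_linear.linear[OF T]])
    also have "\<dots> = 0" using x \<psi>(2) linear_0[OF linear_funpow_TFS(3)] by simp
    finally show "(S ^^ K) x \<in> M \<and> (T ^^ (K + m)) ((S ^^ K) x) = 0"
      using S_funpow_image_Z_subset_M x(1) unfolding K_def by blast
  qed
  then have "fin_dim ((S ^^ K) ` {x \<in> Z. \<psi> ((S ^^ K) x) = 0})"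
    using fin_dim_kernel_T_funpow fin_dim_subset by blast
  then show ?thesis
    using closed_image_if_closed_comp_image[OF Z bounded_linear_funpow[OF S] \<psi>(1) closed_comp]
    by (simp add: K_def)
qed

lemma closed_range_S_funpow: "closed (range (S ^^ (n + d + m)))"
proof -
  obtain E where E: "finite E" "Z + span E = UNIV" by (rule Z_finite_codim)
  have "subspace ((S ^^ (n + d + m)) ` Z)" by (rule linear_subspace_image[OF linear_funpow_TFS(3) Z(2)])
  then show ?thesis
    using range_linear_eq_image_set_plus_span[OF linear_funpow_TFS(3) E(2)]
      closed_set_plus_span[OF finite_imageI[OF E(1)] closed_S_funpow_image_Z] by simp
qed

lemma fin_dim_kernel_S_on_range: "fin_dim {x \<in> range (S ^^ (n + m)). S x = 0}"
proof -
  obtain E where E: "finite E" "Z + span E = UNIV" by (rule Z_finite_codim)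
  let ?N = "{x. S x = 0}"
  have "?N \<inter> (S ^^ (n + m)) ` Z \<subseteq> {y \<in> M. (T ^^ m) y = 0}"
  proof clarify
    fix x assume x: "x \<in> Z" "S ((S ^^ (n + m)) x) = 0"
    let ?y = "(S ^^ (n + m)) x"
    have "?y \<in> M" using S_funpow_image_Z_subset_M[of 0] x(1) by auto
    moreover have "?y \<in> Z" using x(1) funpow_in_invariant[of Z S] Z_invariant(3) by blast
    moreover have "(T ^^ m) ?y = (-1) ^ m *\<^sub>R (F ^^ m) ?y"
      using funpow_on_kernel_of_sum[OF bounded_linear.linear[OF T] bounded_linear.linear[OF F]] commute x(2)
      by (simp add: S_def)
    ultimately show "?y \<in> M \<and> (T ^^ m) ?y = 0" using F_nilpotent_on_Z by simp
  qed
  then have "fin_dim (?N \<inter> (S ^^ (n + m)) ` Z)" using fin_dim_kernel_T_funpow fin_dim_subset by blast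
  then have "fin_dim (?N \<inter> ((S ^^ (n + m)) ` Z + span ((S ^^ (n + m)) ` E)))"
    using fin_dim_Int_set_plus_span[OF finite_imageI[OF E(1)]
        linear_subspace_kernel[OF bounded_linear.linear[OF S]]
        linear_subspace_image[OF linear_funpow_TFS(3) Z(2)]] by blast
  then show ?thesis
    unfolding range_linear_eq_image_set_plus_span[OF linear_funpow_TFS(3) E(2), symmetric]
    by (rule fin_dim_subset) blast
qed

theorem upper_semi_B_fredholm_S: "upper_semi_B_fredholm S"
  unfolding upper_semi_B_fredholm_def upper_semi_fredholm_on_def
proof (intro exI[of _ "n + m"] conjI)
  show "closed (range (S ^^ (n + m)))" using closed_range_S_funpow[of 0] by simp
  have "S ` range (S ^^ (n + m)) = range (S ^^ (n + 1 + m))" by (auto simp: image_iff)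
  moreover have "range (S ^^ (n + 1 + m)) \<subseteq> range (S ^^ (n + m))"
    by (auto simp: funpow_Suc_right simp del: funpow.simps)
  ultimately show "closedin (top_of_set (range (S ^^ (n + m)))) (S ` range (S ^^ (n + m)))"
    using closed_subset closed_range_S_funpow[of 1] by simp
  show "fin_dim {x \<in> range (S ^^ (n + m)). S x = 0}" by (rule fin_dim_kernel_S_on_range)
qed

end

theorem lemma2p7:
  fixes J T F :: "'a::banach \<Rightarrow> 'a"
  assumes "complex_structure J"
    and "\<not> fin_dim (UNIV :: 'a set)"
    and "bounded_op J F"
    and "\<exists>n. fin_dim (range (F ^^ n))"
    and "bounded_op J T"
    and "upper_semi_B_fredholm T"
    and "T \<circ> F = F \<circ> T"
  shows "upper_semi_B_fredholm (\<lambda>x. T x + F x)"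
proof -
  obtain m where "fin_dim (range (F ^^ m))" using assms(4) by blast
  moreover obtain n where "closed (range (T ^^ n))" "upper_semi_fredholm_on (range (T ^^ n)) T"
    using assms(6) by (auto simp: upper_semi_B_fredholm_def)
  moreover have "bounded_linear T" "bounded_linear F" using assms(3,5) by (simp_all add: bounded_op_def)
  moreover have "T (F x) = F (T x)" for x using assms(7) by (metis comp_apply)
  ultimately interpret commuting_finite_rank_perturbation T F n m
    by (simp add: commuting_finite_rank_perturbation_def)
  show ?thesis using upper_semi_B_fredholm_S by (simp add: S_def)
qed

end
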